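(* If $m\ge 10$ is even and $m=3t+1$ for some positive integer $t$, then $\lambda(L_m)<\lambda(T_m)$.
   Context: $\lambda(\cdot)$ denotes the largest adjacency eigenvalue. For even $m$, $L_m$ is obtained from a 5-cycle $u_1u_2u_3u_4u_5$ by adding $\frac{m-6}{2}$ new vertices each adjacent exactly to $u_1$ and $u_3$, and one new vertex adjacent only to $u_1$ (equivalently, $K_{2,\frac{m-2}{2}}$ with one edge subdivided, with a pendant edge attached at a vertex of maximum degree). When $\frac{m-4}{3}$ is a positive integer, $T_m$ is obtained from $C_5$ by replacing two adjacent vertices by independent sets of sizes $\frac{m-4}{3}$ and $2$ (each new vertex adjacent to all vertices/sets that the replaced vertex was adjacent to, so the two sets span a complete bipartite graph). *)

theory Defs
  imports Complex_Main "Jordan_Normal_Form.Char_Poly"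
begin

definition adj_matrix :: "nat \<Rightarrow> (nat \<times> nat) set \<Rightarrow> real mat" where
  "adj_matrix n E = mat n n (\<lambda>(i, j). if (i, j) \<in> E \<or> (j, i) \<in> E then 1 else 0)"

text \<open>Largest adjacency eigenvalue (adjacency matrices are real symmetric,
  so all eigenvalues are real).\<close>

definition lambda_max :: "real mat \<Rightarrow> real" where
  "lambda_max A = Max {x. eigenvalue A x}"

text \<open>The 5-cycle u1 u2 u3 u4 u5 on vertices 0,1,2,3,4.\<close>

definition C5_edges :: "(nat \<times> nat) set" where
  "C5_edges = {(0,1),(1,2),(2,3),(3,4),(4,0)}"

text \<open>L_m (m even): C5 plus (m-6)/2 vertices 5..4+k each adjacent to u1 = 0 and
  u3 = 2, plus a pendant vertex 5+k adjacent to u1 = 0.\<close>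

definition L_nverts :: "nat \<Rightarrow> nat" where
  "L_nverts m = 6 + (m - 6) div 2"

definition L_edges :: "nat \<Rightarrow> (nat \<times> nat) set" where
  "L_edges m = (let k = (m - 6) div 2 in
     C5_edges \<union> {(0, i) | i. 5 \<le> i \<and> i < 5 + k} \<union> {(2, i) | i. 5 \<le> i \<and> i < 5 + k}
       \<union> {(0, 5 + k)})"

definition L_graph_adj :: "nat \<Rightarrow> real mat" where
  "L_graph_adj m = adj_matrix (L_nverts m) (L_edges m)"

text \<open>T_m ((m-4)/3 a positive integer): C5 = v1 v2 v3 v4 v5 with v1 replaced by the
  independent set A = {0..<s}, s = (m-4)/3, and v2 replaced by the independent set
  B = {s, s+1}; v3 = s+2, v4 = s+3, v5 = s+4.\<close>

definition T_nverts :: "nat \<Rightarrow> nat" where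
  "T_nverts m = (m - 4) div 3 + 5"

definition T_edges :: "nat \<Rightarrow> (nat \<times> nat) set" where
  "T_edges m = (let s = (m - 4) div 3 in
     {(a, b) | a b. a < s \<and> (b = s \<or> b = s + 1)}
     \<union> {(a, s + 4) | a. a < s}
     \<union> {(b, s + 2) | b. b = s \<or> b = s + 1}
     \<union> {(s + 2, s + 3), (s + 3, s + 4)})"

definition T_graph_adj :: "nat \<Rightarrow> real mat" where
  "T_graph_adj m = adj_matrix (T_nverts m) (T_edges m)"

end

theory Submission
  imports Defs
begin

text \<open>Both graphs carry equitable partitions: L_m into u1, ..., u5, the class of
  k = (m - 6)/2 twins and the pendant vertex; T_m into the two independent sets and v3, v4, v5.
  Every nonzero eigenvalue of L_m is a root of the characteristic polynomial of its 7 x 7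
  quotient matrix, and every root r > 1 of the quotient polynomial g of T_m lifts to an
  eigenvector of T_m that is constant on the classes. For m = 6j + 4 the former polynomial
  equals x (x g(x) + (j + 1) x^2 + 2j x - 3j), so g is negative at max(lambda(L_m), 1); since g
  tends to infinity, the intermediate value theorem yields an eigenvalue of T_m above
  lambda(L_m).\<close>

definition nbrs :: "nat \<Rightarrow> (nat \<times> nat) set \<Rightarrow> nat \<Rightarrow> nat set" where
  "nbrs n E i = {j. j < n \<and> ((i, j) \<in> E \<or> (j, i) \<in> E)}"

lemma finite_nbrs [simp]: "finite (nbrs n E i)"
  by (simp add: nbrs_def)

lemma adj_matrix_carrier [simp]: "adj_matrix n E \<in> carrier_mat n n"
  by (simp add: adj_matrix_def)

lemma dim_row_adj_matrix [simp]: "dim_row (adj_matrix n E) = n"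
  by (simp add: adj_matrix_def)

lemma adj_matrix_mult_vec_nth:
  assumes "i < n" "w \<in> carrier_vec n"
  shows "(adj_matrix n E *\<^sub>v w) $ i = (\<Sum>j\<in>nbrs n E i. w $ j)"
proof -
  have "(adj_matrix n E *\<^sub>v w) $ i = (\<Sum>j\<in>{0..<n}. if (i, j) \<in> E \<or> (j, i) \<in> E then w $ j else 0)"
    using assms by (auto simp: adj_matrix_def scalar_prod_def intro!: sum.cong)
  also have "\<dots> = (\<Sum>j\<in>{j\<in>{0..<n}. (i, j) \<in> E \<or> (j, i) \<in> E}. w $ j)"
    by (subst sum.inter_filter) auto
  also have "{j\<in>{0..<n}. (i, j) \<in> E \<or> (j, i) \<in> E} = nbrs n E i"
    by (auto simp: nbrs_def)
  finally show ?thesis .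
qed

lemma eigenvalue_adj_matrix_iff:
  "eigenvalue (adj_matrix n E) x \<longleftrightarrow>
     (\<exists>w \<in> carrier_vec n. w \<noteq> 0\<^sub>v n \<and> (\<forall>i<n. (\<Sum>j\<in>nbrs n E i. w $ j) = x * w $ i))"
proof -
  have "adj_matrix n E *\<^sub>v w = x \<cdot>\<^sub>v w \<longleftrightarrow> (\<forall>i<n. (\<Sum>j\<in>nbrs n E i. w $ j) = x * w $ i)"
    if "w \<in> carrier_vec n" for w
    using that by (auto simp: vec_eq_iff adj_matrix_mult_vec_nth simp del: index_mult_mat_vec)
  then show ?thesis
    unfolding eigenvalue_def eigenvector_def by auto
qed

lemma nbrs_sym: "i < n \<Longrightarrow> l < n \<Longrightarrow> i \<in> nbrs n E l \<longleftrightarrow> l \<in> nbrs n E i"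
  by (auto simp: nbrs_def)

lemma eigenvalue_0_adj_matrix_if_twins:
  assumes "i < n" "j < n" "i \<noteq> j" and twins: "nbrs n E i = nbrs n E j"
  shows "eigenvalue (adj_matrix n E) 0"
  unfolding eigenvalue_adj_matrix_iff
proof (intro bexI conjI allI impI)
  let ?w = "unit_vec n i - unit_vec n j :: real vec"
  show "?w \<in> carrier_vec n" by simp
  show "?w \<noteq> 0\<^sub>v n"
  proof
    assume "?w = 0\<^sub>v n"
    then have "?w $ i = 0" using assms by simp
    with assms show False by simp
  qed
  fix l assume "l < n"
  have "(\<Sum>q\<in>nbrs n E l. ?w $ q) =
      (\<Sum>q\<in>nbrs n E l. (if q = i then 1 else 0) - (if q = j then 1 else 0))"
    by (rule sum.cong) (auto simp: nbrs_def assms)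
  also have "\<dots> = (if i \<in> nbrs n E l then 1 else 0) - (if j \<in> nbrs n E l then 1 else 0)"
    by (simp add: sum_subtractf)
  also have "\<dots> = 0"
    using nbrs_sym[OF \<open>i < n\<close> \<open>l < n\<close>] nbrs_sym[OF \<open>j < n\<close> \<open>l < n\<close>] twins by simp
  finally show "(\<Sum>q\<in>nbrs n E l. ?w $ q) = 0 * ?w $ l" by simp
qed

lemma finite_eigenvalues:
  assumes "(A :: real mat) \<in> carrier_mat n n"
  shows "finite {x. eigenvalue A x}"
proof -
  have "char_poly A \<noteq> 0"
    using degree_monic_char_poly[OF assms] by auto
  then have "finite {x. poly (char_poly A) x = 0}"
    by (rule poly_roots_finite)
  then show ?thesis
    using eigenvalue_root_char_poly[OF assms] by simp
qed

lemma eigenvalue_le_lambda_max: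
  assumes "A \<in> carrier_mat n n" "eigenvalue A x"
  shows "x \<le> lambda_max A"
  using finite_eigenvalues[OF assms(1)] assms(2) by (simp add: lambda_max_def)

lemma eigenvalue_lambda_max:
  assumes "A \<in> carrier_mat n n" "eigenvalue A x"
  shows "eigenvalue A (lambda_max A)"
  using Max_in[OF finite_eigenvalues[OF assms(1)]] assms(2) unfolding lambda_max_def by auto

definition Lk_edges :: "nat \<Rightarrow> (nat \<times> nat) set" where
  "Lk_edges k = C5_edges \<union> {(0, i) | i. 5 \<le> i \<and> i < 5 + k} \<union> {(2, i) | i. 5 \<le> i \<and> i < 5 + k}
     \<union> {(0, 5 + k)}"

lemma L_graph_adj_eq: "L_graph_adj m = adj_matrix ((m - 6) div 2 + 6) (Lk_edges ((m - 6) div 2))"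
  by (simp add: L_graph_adj_def L_nverts_def L_edges_def Lk_edges_def Let_def add.commute)

lemma nbrs_Lk_edges:
  "nbrs (k+6) (Lk_edges k) 0 = insert 1 (insert 4 (insert (k+5) {5..<k+5}))"
  "nbrs (k+6) (Lk_edges k) 1 = {0, 2}"
  "nbrs (k+6) (Lk_edges k) 2 = insert 1 (insert 3 {5..<k+5})"
  "nbrs (k+6) (Lk_edges k) 3 = {2, 4}"
  "nbrs (k+6) (Lk_edges k) 4 = {0, 3}"
  "nbrs (k+6) (Lk_edges k) (k+5) = {0}"
  "5 \<le> i \<Longrightarrow> i < k+5 \<Longrightarrow> nbrs (k+6) (Lk_edges k) i = {0, 2}"
  unfolding nbrs_def Lk_edges_def C5_edges_def by auto

lemma eigenvalue_lambda_max_Lk_edges: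
  assumes "k \<ge> 2"
  shows "eigenvalue (adj_matrix (k+6) (Lk_edges k)) (lambda_max (adj_matrix (k+6) (Lk_edges k)))"
proof -
  have "nbrs (k+6) (Lk_edges k) 5 = nbrs (k+6) (Lk_edges k) 6"
    using assms by (simp add: nbrs_Lk_edges)
  then have "eigenvalue (adj_matrix (k+6) (Lk_edges k)) 0"
    by (rule eigenvalue_0_adj_matrix_if_twins[rotated 3]) (use assms in simp_all)
  then show ?thesis
    by (rule eigenvalue_lambda_max[OF adj_matrix_carrier])
qed

definition Ts_edges :: "nat \<Rightarrow> (nat \<times> nat) set" where
  "Ts_edges s = {(a, b) | a b. a < s \<and> (b = s \<or> b = s + 1)} \<union> {(a, s + 4) | a. a < s}
     \<union> {(b, s + 2) | b. b = s \<or> b = s + 1} \<union> {(s + 2, s + 3), (s + 3, s + 4)}"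

lemma T_graph_adj_eq: "T_graph_adj m = adj_matrix ((m - 4) div 3 + 5) (Ts_edges ((m - 4) div 3))"
  by (simp add: T_graph_adj_def T_nverts_def T_edges_def Ts_edges_def Let_def)

lemma nbrs_Ts_edges:
  "i < s \<Longrightarrow> nbrs (s+5) (Ts_edges s) i = {s, s+1, s+4}"
  "nbrs (s+5) (Ts_edges s) s = insert (s+2) {..<s}"
  "nbrs (s+5) (Ts_edges s) (s+1) = insert (s+2) {..<s}"
  "nbrs (s+5) (Ts_edges s) (s+2) = {s, s+1, s+3}"
  "nbrs (s+5) (Ts_edges s) (s+3) = {s+2, s+4}"
  "nbrs (s+5) (Ts_edges s) (s+4) = insert (s+3) {..<s}"
  unfolding nbrs_def Ts_edges_def by auto

text \<open>Characteristic polynomials of the quotient matrices of the two equitable partitions.\<close>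

definition L_quot_poly :: "real \<Rightarrow> real \<Rightarrow> real" where
  "L_quot_poly k x = x^7 - (2*k + 6)*x^5 + (5*k + 8)*x^3 - (2*k + 2)*x^2 - (k + 1)*x"

definition T_quot_poly :: "real \<Rightarrow> real \<Rightarrow> real" where
  "T_quot_poly s x = x^5 - (3*s + 4)*x^3 + (7*s + 2)*x - 4*s"

text \<open>Cramer's rule for the quotient system of L_m, S being the sum over the twin class:
  the cofactors below are rows of the adjugate of x I - Q, Q the quotient matrix.\<close>

lemma L_quot_poly_mult_eq_0:
  fixes x a b c d e p S k :: real
  assumes "x*a = b+e+S+p" "x*b = a+c" "x*c = b+d+S" "x*d = c+e" "x*e = d+a" "x*p = a"
    "x*S = k*(a+c)"
  shows "L_quot_poly k x * a = 0" "L_quot_poly k x * b = 0" "L_quot_poly k x * c = 0"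
    "L_quot_poly k x * d = 0" "L_quot_poly k x * e = 0" "L_quot_poly k x * p = 0"
proof -
  have r: "x*a - (b+e+S+p) = 0" "x*b - (a+c) = 0" "x*c - (b+d+S) = 0" "x*d-(c+e) = 0"
    "x*e-(d+a) = 0" "x*p-a = 0" "x*S-k*(a+c) = 0"
    using assms by simp_all
  have "L_quot_poly k x * a =
      (x^6 - x^4*k - 3*x^4 + x^2*k + x^2)*(x*a - (b+e+S+p))
      + (x^5 - 2*x^3 + x^2)*(x*b - (a+c)) + (x^4*k + x^4 + x^3 - x^2*k - x^2)*(x*c - (b+d+S))
      + (x^4 + x^3*k + x^3 - x^2*k - x^2)*(x*d-(c+e))
      + (x^5 - x^3*k - 2*x^3 + x^2*k + x^2)*(x*e-(d+a))
      + (x^5 - x^3*k - 3*x^3 + x*k + x)*(x*p-a) + (x^5 - 2*x^3 + x^2)*(x*S-k*(a+c))"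
    by (simp add: L_quot_poly_def algebra_simps power_numeral_reduce)
  then show "L_quot_poly k x * a = 0"
    unfolding r by simp
  have "L_quot_poly k x * b =
      (x^5 - 2*x^3 + x^2)*(x*a - (b+e+S+p))
      + (x^6 - 2*x^4*k - 4*x^4 + 5*x^2*k + 3*x^2 - 2*x*k - k)*(x*b - (a+c))
      + (x^5 - 3*x^3 + x^2 + x)*(x*c - (b+d+S)) + (x^4 + x^3 - 2*x^2)*(x*d-(c+e))
      + (x^4 + x^3 - x^2 - x)*(x*e-(d+a)) + (x^4 - 2*x^2 + x)*(x*p-a)
      + (2*x^4 - 5*x^2 + 2*x + 1)*(x*S-k*(a+c))"
    by (simp add: L_quot_poly_def algebra_simps power_numeral_reduce)
  then show "L_quot_poly k x * b = 0"
    unfolding r by simp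
  have "L_quot_poly k x * c =
      (x^4*k + x^4 + x^3 - x^2*k - x^2)*(x*a - (b+e+S+p))
      + (x^5 - 3*x^3 + x^2 + x)*(x*b - (a+c))
      + (x^6 - x^4*k - 4*x^4 + x^2*k + 2*x^2)*(x*c - (b+d+S))
      + (x^5 - x^3*k - 3*x^3 + x^2*k + x^2)*(x*d-(c+e))
      + (x^4 + x^3*k + x^3 - x^2*k - 2*x^2)*(x*e-(d+a))
      + (x^3*k + x^3 + x^2 - x*k - x)*(x*p-a) + (x^5 - 3*x^3 + x^2 + x)*(x*S-k*(a+c))"
    by (simp add: L_quot_poly_def algebra_simps power_numeral_reduce)
  then show "L_quot_poly k x * c = 0"
    unfolding r by simp
  have "L_quot_poly k x * d =
      (x^4 + x^3*k + x^3 - x^2*k - x^2)*(x*a - (b+e+S+p)) + (x^4 + x^3 - 2*x^2)*(x*b - (a+c))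
      + (x^5 - x^3*k - 3*x^3 + x^2*k + x^2)*(x*c - (b+d+S))
      + (x^6 - 2*x^4*k - 4*x^4 + 2*x^2*k + 2*x^2)*(x*d-(c+e))
      + (x^5 - 2*x^3*k - 3*x^3 + x^2*k + x^2 + x*k + x)*(x*e-(d+a))
      + (x^3 + x^2*k + x^2 - x*k - x)*(x*p-a) + (x^4 + x^3 - 2*x^2)*(x*S-k*(a+c))"
    by (simp add: L_quot_poly_def algebra_simps power_numeral_reduce)
  then show "L_quot_poly k x * d = 0"
    unfolding r by simp
  have "L_quot_poly k x * e =
      (x^5 - x^3*k - 2*x^3 + x^2*k + x^2)*(x*a - (b+e+S+p))
      + (x^4 + x^3 - x^2 - x)*(x*b - (a+c))
      + (x^4 + x^3*k + x^3 - x^2*k - 2*x^2)*(x*c - (b+d+S))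
      + (x^5 - 2*x^3*k - 3*x^3 + x^2*k + x^2 + x*k + x)*(x*d-(c+e))
      + (x^6 - 2*x^4*k - 4*x^4 + 2*x^2*k + 3*x^2)*(x*e-(d+a))
      + (x^4 - x^2*k - 2*x^2 + x*k + x)*(x*p-a) + (x^4 + x^3 - x^2 - x)*(x*S-k*(a+c))"
    by (simp add: L_quot_poly_def algebra_simps power_numeral_reduce)
  then show "L_quot_poly k x * e = 0"
    unfolding r by simp
  have "L_quot_poly k x * p =
      (x^5 - x^3*k - 3*x^3 + x*k + x)*(x*a - (b+e+S+p)) + (x^4 - 2*x^2 + x)*(x*b - (a+c))
      + (x^3*k + x^3 + x^2 - x*k - x)*(x*c - (b+d+S))
      + (x^3 + x^2*k + x^2 - x*k - x)*(x*d-(c+e))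
      + (x^4 - x^2*k - 2*x^2 + x*k + x)*(x*e-(d+a))
      + (x^6 - 2*x^4*k - 5*x^4 + 4*x^2*k + 5*x^2 - 2*x*k - 2*x)*(x*p-a)
      + (x^4 - 2*x^2 + x)*(x*S-k*(a+c))"
    by (simp add: L_quot_poly_def algebra_simps power_numeral_reduce)
  then show "L_quot_poly k x * p = 0"
    unfolding r by simp
qed

lemma L_quot_poly_root_if_eigenvalue:
  assumes "eigenvalue (adj_matrix (k+6) (Lk_edges k)) x" "x \<noteq> 0"
  shows "L_quot_poly (real k) x = 0"
proof (rule ccontr)
  assume nz: "L_quot_poly (real k) x \<noteq> 0"
  from assms(1) obtain w where w: "w \<in> carrier_vec (k+6)" "w \<noteq> 0\<^sub>v (k+6)"
    and eq: "\<And>i. i < k+6 \<Longrightarrow> (\<Sum>j\<in>nbrs (k+6) (Lk_edges k) i. w $ j) = x * w $ i"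
    unfolding eigenvalue_adj_matrix_iff by blast
  note N = nbrs_Lk_edges[where k = k]
  define S where "S = (\<Sum>j\<in>{5..<k+5}. w $ j)"
  have twin: "x * w $ i = w $ 0 + w $ 2" if "5 \<le> i" "i < k+5" for i
    using eq[of i] N(7)[OF that] that by simp
  have "x * S = real k * (w $ 0 + w $ 2)"
    unfolding S_def sum_distrib_left by (simp add: twin)
  moreover have "x * w $ 0 = w $ 1 + w $ 4 + S + w $ (k+5)"
    using eq[of 0] N(1) by (simp add: S_def algebra_simps)
  moreover have "x * w $ 1 = w $ 0 + w $ 2"
    using eq[of 1] N(2) by simp
  moreover have "x * w $ 2 = w $ 1 + w $ 3 + S"
    using eq[of 2] N(3) by (simp add: S_def algebra_simps)
  moreover have "x * w $ 3 = w $ 2 + w $ 4"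
    using eq[of 3] N(4) by simp
  moreover have "x * w $ 4 = w $ 3 + w $ 0"
    using eq[of 4] N(5) by (simp add: algebra_simps)
  moreover have "x * w $ (k+5) = w $ 0"
    using eq[of "k+5"] N(6) by simp
  ultimately have z: "w $ 0 = 0" "w $ 1 = 0" "w $ 2 = 0" "w $ 3 = 0" "w $ 4 = 0" "w $ (k+5) = 0"
    using L_quot_poly_mult_eq_0[where a = "w $ 0" and b = "w $ 1" and c = "w $ 2" and d = "w $ 3"
      and e = "w $ 4" and p = "w $ (k+5)" and S = S and k = "real k" and x = x] nz
    by auto
  have "w $ i = 0" if i: "i < k+6" for i
  proof -
    consider "i \<le> 4" | "i = k+5" | "5 \<le> i" "i < k+5" using i by fastforce
    then show ?thesis
    proof cases
      case 1
      then have "i \<in> {0, 1, 2, 3, 4}" by auto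
      with z show ?thesis by auto
    next
      case 3
      then show ?thesis using twin[OF 3] z \<open>x \<noteq> 0\<close> by simp
    qed (use z in simp)
  qed
  then have "w = 0\<^sub>v (k+6)"
    using w(1) by (intro eq_vecI) auto
  with w(2) show False ..
qed

lemma L_quot_poly_eq_T_quot_poly:
  fixes j x :: real
  shows "L_quot_poly (3*j - 1) x = x * (x * T_quot_poly (2*j) x + (j + 1)*x^2 + 2*j*x - 3*j)"
  by (simp add: L_quot_poly_def T_quot_poly_def algebra_simps power_numeral_reduce)

lemma T_quot_poly_neg_at_L_quot_poly_root:
  fixes j x :: real
  assumes "j \<ge> 0" "x \<ge> 1" "L_quot_poly (3*j - 1) x = 0"
  shows "T_quot_poly (2*j) x < 0"
proof -
  have "x * T_quot_poly (2*j) x = - ((j + 1)*x^2 + 2*j*x - 3*j)"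
    using assms L_quot_poly_eq_T_quot_poly[of j x] by simp
  moreover have "(j + 1)*x^2 + 2*j*x - 3*j \<ge> 1"
  proof -
    have "x^2 \<ge> 1" using assms(2) by (simp add: one_le_power)
    then have "(j + 1)*x^2 \<ge> j + 1" using assms(1) mult_left_mono[of 1 "x^2" "j + 1"] by simp
    moreover have "2*j*x \<ge> 2*j" using assms mult_left_mono[of 1 x "2*j"] by simp
    ultimately show ?thesis by linarith
  qed
  ultimately have "x * T_quot_poly (2*j) x < 0" by linarith
  with assms(2) show ?thesis by (simp add: mult_less_0_iff)
qed

lemma T_quot_poly_neg_at_Lk_eigenvalue:
  assumes "k + 1 = 3 * j" "eigenvalue (adj_matrix (k+6) (Lk_edges k)) x"
  shows "T_quot_poly (2 * real j) (max x 1) < 0"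
proof (cases "x \<ge> 1")
  case True
  have "real k = 3 * real j - 1"
    using arg_cong[OF assms(1), of real] by simp
  then have "L_quot_poly (3 * real j - 1) x = 0"
    using L_quot_poly_root_if_eigenvalue[OF assms(2)] True by simp
  with True show ?thesis
    using T_quot_poly_neg_at_L_quot_poly_root[of "real j" x] by simp
next
  case False
  then show ?thesis by (simp add: T_quot_poly_def)
qed

text \<open>The rows at the vertices of B, v3 and A force c, d and e; a and b are chosen so that
  the row at v5 holds identically, and the row at v4 is the equation T_quot_poly s r = 0.\<close>

lemma eigenvalue_Ts_edges_if_root:
  assumes "r > 1" "T_quot_poly (real s) r = 0"
  shows "eigenvalue (adj_matrix (s+5) (Ts_edges s)) r"
proof -
  define a where "a = r^2 + 2*r - 2"
  define b where "b = r^2 + r*s - s"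
  define c where "c = r*b - s*a"
  define d where "d = r*c - 2*b"
  define e where "e = r*a - 2*b"
  define w where "w = vec (s+5) (\<lambda>j. if j < s then a else if j < s+2 then b
    else if j = s+2 then c else if j = s+3 then d else e)"
  have "b > 0"
  proof -
    have "b = r^2 + real s * (r - 1)" by (simp add: b_def algebra_simps)
    moreover have "r^2 > 0" "real s * (r - 1) \<ge> 0" using assms(1) by simp_all
    ultimately show ?thesis by linarith
  qed
  have row_v4: "c + e = r * d"
  proof -
    have "r*d - (c + e) = T_quot_poly (real s) r"
      unfolding a_def b_def c_def d_def e_def T_quot_poly_def
      by (simp add: algebra_simps power_numeral_reduce)
    with assms(2) show ?thesis by simp
  qed
  have row_v5: "d + s*a = r * e"
    unfolding a_def b_def c_def d_def e_def by (simp add: algebra_simps power_numeral_reduce)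
  have sum_A: "(\<Sum>j\<in>{..<s}. w $ j) = s * a"
    by (simp add: w_def)
  note N = nbrs_Ts_edges[where s = s]
  show ?thesis
    unfolding eigenvalue_adj_matrix_iff
  proof (intro bexI conjI allI impI)
    show w: "w \<in> carrier_vec (s+5)" by (simp add: w_def)
    show "w \<noteq> 0\<^sub>v (s+5)"
    proof
      assume "w = 0\<^sub>v (s+5)"
      then have "w $ s = 0" by simp
      with \<open>b > 0\<close> show False by (simp add: w_def)
    qed
    fix i assume "i < s+5"
    then consider "i < s" | "i = s" | "i = s+1" | "i = s+2" | "i = s+3" | "i = s+4" by linarith
    then show "(\<Sum>j\<in>nbrs (s+5) (Ts_edges s) i. w $ j) = r * w $ i"
    proof cases
      case 1
      then show ?thesis by (simp add: N(1)[OF 1] w_def e_def)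
    next
      case 2
      show ?thesis using sum_A unfolding 2 N(2) by (simp add: w_def c_def)
    next
      case 3
      show ?thesis using sum_A unfolding 3 N(3) by (simp add: w_def c_def)
    next
      case 4
      show ?thesis unfolding 4 N(4) by (simp add: w_def d_def)
    next
      case 5
      show ?thesis using row_v4 unfolding 5 N(5) by (simp add: w_def)
    next
      case 6
      show ?thesis using sum_A row_v5 unfolding 6 N(6) by (simp add: w_def algebra_simps)
    qed
  qed
qed

lemma Ts_edges_eigenvalue_above:
  assumes "x \<ge> 1" "T_quot_poly (real s) x < 0"
  obtains r where "r > x" "eigenvalue (adj_matrix (s+5) (Ts_edges s)) r"
proof -
  define B where "B = x + 3 * real s + 5"
  have "T_quot_poly (real s) B > 0"
  proof -
    have B: "B \<ge> 3 * real s + 6" using assms(1) by (simp add: B_def)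
    then have "B^2 \<ge> B" by (simp add: power2_eq_square)
    with B have "B^3 * (B^2 - (3*s + 4)) \<ge> 0" by simp
    moreover have "(7*s + 2) * (B - 1) \<ge> 0" using B by simp
    moreover have "T_quot_poly (real s) B = B^3 * (B^2 - (3*s + 4)) + (7*s + 2) * (B - 1) + 3*s + 2"
      by (simp add: T_quot_poly_def algebra_simps power_numeral_reduce)
    ultimately show ?thesis by linarith
  qed
  moreover have "continuous_on {x..B} (T_quot_poly (real s))"
    unfolding T_quot_poly_def by (intro continuous_intros)
  moreover have "x \<le> B" by (simp add: B_def)
  ultimately obtain r where r: "x \<le> r" "T_quot_poly (real s) r = 0"
    using IVT'[of "T_quot_poly (real s)" x 0 B] assms(2) by auto
  with assms(2) have "r > x" by (cases "r = x") auto
  with assms(1) r(2) show thesis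
    using that eigenvalue_Ts_edges_if_root by auto
qed

theorem lemma2p3:
  fixes m t :: nat
  assumes "m \<ge> 10" and "even m" and "t > 0" and "m = 3 * t + 1"
  shows "lambda_max (L_graph_adj m) < lambda_max (T_graph_adj m)"
proof -
  obtain j where m: "m = 6*j + 4" and "j \<ge> 1"
  proof -
    from assms have "odd t" by auto
    then obtain i where "t = 2*i + 1" by (rule oddE)
    with assms that show thesis by auto
  qed
  define k where "k = 3*j - 1"
  have "(m - 6) div 2 = k" "(m - 4) div 3 = 2*j"
    using \<open>j \<ge> 1\<close> unfolding m k_def by presburger+
  then have L: "L_graph_adj m = adj_matrix (k+6) (Lk_edges k)"
    and T: "T_graph_adj m = adj_matrix (2*j+5) (Ts_edges (2*j))"
    using L_graph_adj_eq[of m] T_graph_adj_eq[of m] by simp_all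
  let ?x0 = "max (lambda_max (L_graph_adj m)) 1"
  have "k \<ge> 2" "k + 1 = 3*j" using \<open>j \<ge> 1\<close> by (simp_all add: k_def)
  then have "T_quot_poly (real (2*j)) ?x0 < 0"
    using T_quot_poly_neg_at_Lk_eigenvalue eigenvalue_lambda_max_Lk_edges unfolding L by simp
  then obtain r where "r > ?x0" "eigenvalue (T_graph_adj m) r"
    using Ts_edges_eigenvalue_above[of ?x0 "2*j"] unfolding T by auto
  then show ?thesis
    using eigenvalue_le_lambda_max[OF adj_matrix_carrier] unfolding T by force
qed

end
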